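(* For all positive integers $m$ and all $r = 0,1,\ldots,m-1$, the number of rows of $H(r,m)$ is $$g(r,m) = \sum_{i=0}^{r} \binom{m-r-1+i}{i} 2^i.$$
   Context: All matrices are binary. The matrices $G(r,m)$, $0\le r\le m$, are defined recursively by $G(m,m) = I_{2^m}$, $G(0,m) = (11\cdots1)$ (length $2^m$), and for $0<r<m$, $G(r,m) = \begin{pmatrix} G(r,m-1) & G(r,m-1) \\ \mathbf{0} & G(r-1,m-1)\end{pmatrix}$ (so $G(m-1,m)$ has $2^m-1$ rows). The matrices $H(r,m)$ are defined by: for all $m \ge 0$, $H(0,m) = (11\cdots1)$ (length $2^m$), $H(m-1,m) = G(m-1,m)$, $H(m,m) = I_{2^m}$; and for all positive integers $m$ and $r = 1,\ldots,m-2$, $$H(r,m) = \begin{pmatrix} H(r,m-1) & H(r,m-1) \\ \mathbf{0} & H(r-1,m-1) \\ H(r-1,m-1) & \mathbf{0}\end{pmatrix}.$$ *)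

theory Defs
  imports Main
begin

text \<open>Binary matrices are represented as lists of rows; each row is a list of booleans
  (True = 1, False = 0). The number of rows of a matrix M is length M.\<close>

definition ident :: "nat \<Rightarrow> bool list list" where
  "ident n = map (\<lambda>i. map (\<lambda>j. i = j) [0..<n]) [0..<n]"

definition ones_row :: "nat \<Rightarrow> bool list list" where
  "ones_row n = [replicate n True]"

fun G :: "nat \<Rightarrow> nat \<Rightarrow> bool list list" where
  "G r m = (if r = m then ident (2^m)
            else if r = 0 then ones_row (2^m)
            else if r < m then
              (let A = G r (m-1); B = G (r-1) (m-1) in
                 map (\<lambda>x. x @ x) A @ map (\<lambda>y. replicate (2^(m-1)) False @ y) B)
            else [])"

declare G.simps[simp del]

fun H :: "nat \<Rightarrow> nat \<Rightarrow> bool list list" where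
  "H r m = (if r = 0 then ones_row (2^m)
            else if r = m then ident (2^m)
            else if r + 1 = m then G r m
            else if r < m then
              (let A = H r (m-1); B = H (r-1) (m-1); Z = replicate (2^(m-1)) False in
                 map (\<lambda>x. x @ x) A @ map (\<lambda>y. Z @ y) B @ map (\<lambda>y. y @ Z) B)
            else [])"

declare H.simps[simp del]

end

theory Submission
  imports Defs
begin

text \<open>Writing \<open>m = r + 1 + k\<close>, the recursive definition of \<open>H\<close> gives the row count
  recurrence \<open>|H(r, m+1)| = |H(r, m)| + 2 |H(r-1, m)|\<close>, with boundary values \<open>|H(0, m)| = 1\<close>
  and \<open>|H(r, r+1)| = |G(r, r+1)| = 2^(r+1) - 1\<close>. The sum \<open>\<Sum>i\<le>r. C(k+i, i) 2^i\<close> satisfies the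
  same recurrence in \<open>(k, r)\<close> by Pascal's rule and has the same boundary values, so a double
  induction on \<open>r\<close> and \<open>k\<close> identifies the two.\<close>

definition binom_pow2_sum :: "nat \<Rightarrow> nat \<Rightarrow> nat" where
  "binom_pow2_sum k r = (\<Sum>i\<le>r. ((k + i) choose i) * 2^i)"

lemma binom_pow2_sum_0_right [simp]: "binom_pow2_sum k 0 = 1"
  by (simp add: binom_pow2_sum_def)

lemma binom_pow2_sum_0_left: "binom_pow2_sum 0 r + 1 = 2 ^ Suc r"
  by (induction r) (simp_all add: binom_pow2_sum_def)

lemma binom_pow2_sum_Suc_Suc:
  "binom_pow2_sum (Suc k) (Suc r) = binom_pow2_sum k (Suc r) + 2 * binom_pow2_sum (Suc k) r"
proof -
  have "binom_pow2_sum (Suc k) (Suc r)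
        = 1 + (\<Sum>i\<le>r. ((Suc k + Suc i) choose Suc i) * 2 ^ Suc i)"
    unfolding binom_pow2_sum_def by (subst sum.atMost_Suc_shift) simp
  also have "\<dots> = 1 + (\<Sum>i\<le>r. ((k + Suc i) choose Suc i) * 2 ^ Suc i)
                    + (\<Sum>i\<le>r. ((Suc k + i) choose i) * 2 ^ Suc i)"
    by (simp add: sum.distrib algebra_simps)
  also have "1 + (\<Sum>i\<le>r. ((k + Suc i) choose Suc i) * 2 ^ Suc i) = binom_pow2_sum k (Suc r)"
    unfolding binom_pow2_sum_def by (subst sum.atMost_Suc_shift) simp
  also have "(\<Sum>i\<le>r. ((Suc k + i) choose i) * 2 ^ Suc i) = 2 * binom_pow2_sum (Suc k) r"
    unfolding binom_pow2_sum_def by (simp add: sum_distrib_left algebra_simps)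
  finally show ?thesis .
qed

lemma length_G_Suc: "length (G m (Suc m)) + 1 = 2 ^ Suc m"
proof (induction m)
  case 0
  then show ?case by (simp add: G.simps ones_row_def)
next
  case (Suc m)
  have "G (Suc m) (Suc (Suc m)) = map (\<lambda>x. x @ x) (ident (2 ^ Suc m)) @
        map (\<lambda>y. replicate (2 ^ Suc m) False @ y) (G m (Suc m))"
    by (simp add: G.simps[of "Suc m" "Suc (Suc m)"] G.simps[of "Suc m" "Suc m"] Let_def)
  with Suc.IH show ?case by (simp add: ident_def)
qed

lemma length_H_0_left: "length (H 0 m) = 1"
  by (simp add: H.simps ones_row_def)

lemma length_H_Suc: "length (H m (Suc m)) + 1 = 2 ^ Suc m"
  using length_G_Suc[of m] by (simp add: H.simps[of m] ones_row_def)

lemma length_H_Suc_Suc: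
  assumes "Suc r < m"
  shows "length (H (Suc r) (Suc m)) = length (H (Suc r) m) + 2 * length (H r m)"
  using assms by (simp add: H.simps[of "Suc r" "Suc m"] Let_def)

lemma length_H_eq_binom_pow2_sum: "length (H r (r + 1 + k)) = binom_pow2_sum k r"
proof (induction r arbitrary: k)
  case 0
  show ?case by (simp add: length_H_0_left)
next
  case (Suc r)
  note length_H_r = Suc.IH
  show ?case
  proof (induction k)
    case 0
    show ?case using length_H_Suc[of "Suc r"] binom_pow2_sum_0_left[of "Suc r"] by simp
  next
    case (Suc k)
    have "length (H (Suc r) (Suc r + 1 + Suc k))
          = length (H (Suc r) (Suc r + 1 + k)) + 2 * length (H r (r + 1 + Suc k))"
      using length_H_Suc_Suc[of r "Suc r + 1 + k"] by simp
    also have "\<dots> = binom_pow2_sum (Suc k) (Suc r)"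
      using Suc.IH length_H_r[of "Suc k"] by (simp add: binom_pow2_sum_Suc_Suc)
    finally show ?case .
  qed
qed

theorem lemma13:
  fixes m r :: nat
  assumes "0 < m" and "r < m"
  shows "length (H r m) = (\<Sum>i\<le>r. ((m - r - 1 + i) choose i) * 2^i)"
proof -
  have "m = r + 1 + (m - r - 1)"
    using assms(2) by simp
  then have "length (H r m) = binom_pow2_sum (m - r - 1) r"
    by (metis length_H_eq_binom_pow2_sum)
  then show ?thesis
    by (simp add: binom_pow2_sum_def)
qed

end
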